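(* Let $\mu\in\mathbb N_0$, let $W\in\mathsf{Gr}_\mu(F)$ and let $A\subseteq F$ be a subalgebra (for the polynomial multiplication of $F=\mathbb C[\partial_1,\dots,\partial_n]$) with $W\cdot A=W$. Let $S$ be a Sato operator of $W$. Then: (1) for every $f\in A$ there is a unique $\mathtt L_S(f)\in\mathfrak S$ with $S\cdot f=\mathtt L_S(f)\cdot S$ in $\mathfrak S$, and $o(\mathtt L_S(f))=\deg(f)$; (2) $A\to\mathfrak S$, $f\mapsto\mathtt L_S(f)$, is an injective homomorphism of $\mathbb C$-algebras; (3) for every $f\in A$ and $w\in F$: $(w\circ\mathtt L_S(f))\circ S=(w\circ S)\cdot f$, i.e. the map $F\to W$, $w\mapsto w\circ S$, intertwines the right action of $\mathtt L_S(f)$ on $F$ with multiplication by $f$ on $W$.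
   Context: $n\in\mathbb N$, $\widehat B=\mathbb C[[x_1,\dots,x_n]]$, $\mathfrak m$ its maximal ideal, $\upsilon$ the $\mathfrak m$-adic valuation. $\mathfrak S$ is the algebra of formal sums $P=\sum_{\underline k\in\mathbb N_0^n}a_{\underline k}\underline\partial^{\underline k}$ ($a_{\underline k}\in\widehat B$) of finite order $o(P)=\sup_{\underline k}(|\underline k|-\upsilon(a_{\underline k}))$, with multiplication given by the Leibniz rule; it contains $\mathbb C[\partial_1,\dots,\partial_n]$. Writing $P=\sum\alpha_{\underline k,\underline i}\underline x^{\underline i}\underline\partial^{\underline k}$, the homogeneous components are $P_m=\sum_{|\underline i|-|\underline k|=m}\alpha_{\underline k,\underline i}\underline x^{\underline i}\underline\partial^{\underline k}$ and the symbol is $\sigma(P)=P_{-o(P)}$. $F=\mathfrak S/\mathfrak m\mathfrak S\cong\mathbb C[\partial_1,\dots,\partial_n]$ is a right $\mathfrak S$-module ($w\circ P$); the order of $w\in F$ is its degree. $P$ is regular if $w\mapsto w\circ\sigma(P)$ is injective on $F$. For $W\subseteq F$, $W_k=\{w\in W:o(w)\le k\}$; $\mathsf{Gr}_\mu(F)=\{W:\dim W_{\mu+k}=\binom{n+k}{n}\ \forall k\in\mathbb N_0\}$. A Sato operator of $W$ is a regular $S\in\mathfrak S$ with $o(S)=\mu$ and $W=F\circ S$. *)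

theory Defs
  imports Complex_Main "HOL-Library.Function_Algebras" "HOL-Library.Extended_Real"
begin

text \<open>Variables x_1..x_n are indexed by a finite type 'n (so n = CARD('n) \<ge> 1).  An element of \<frakS> is represented by its
  full coefficient family: P k i is the coefficient alpha_{k,i} of x^i d^k
  (x's to the left of the d's, as in P = sum a_k d^k with a_k in C[[x]]).
  An element w of F = C[d_1..d_n] is represented by its coefficient function
  (w k = coefficient of d^k), with finite support.\<close>

type_synonym 'n mi = "'n \<Rightarrow> nat"
type_synonym 'n dop = "'n mi \<Rightarrow> 'n mi \<Rightarrow> complex"
type_synonym 'n Fel = "'n mi \<Rightarrow> complex"

definition msize :: "('n::finite) mi \<Rightarrow> nat" where
  "msize k = (\<Sum>v\<in>UNIV. k v)"

text \<open>Order o(P) = sup (|k| - |i|) over the nonzero coefficients alpha_{k,i}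
  (equivalently sup_k (|k| - v(a_k))); -\<infinity> for P = 0.\<close>
definition ord :: "('n::finite) dop \<Rightarrow> ereal" where
  "ord P = Sup ((\<lambda>(k, i). ereal (real (msize k) - real (msize i))) ` {(k, i). P k i \<noteq> 0})"

definition Salg :: "('n::finite) dop set" where
  "Salg = {P. ord P < \<infinity>}"

text \<open>Multiplication by the Leibniz rule:
  (x^i d^k)(x^j d^l) = sum_{m \<le> k, m \<le> j} C(k,m) [j]_m x^{i+j-m} d^{k-m+l}.
  The coefficient of x^p d^q of P*Q collects the terms with i \<le> p, m \<le> k,
  k \<le> q + m, j = p - i + m, l = q + m - k (a finite sum for P of finite order).\<close>
definition dmul :: "('n::finite) dop \<Rightarrow> 'n dop \<Rightarrow> 'n dop" where
  "dmul P Q = (\<lambda>q p. \<Sum>(k, i, m) \<in> {(k, i, m). i \<le> p \<and> m \<le> k \<and> k \<le> q + m \<and> P k i \<noteq> 0}.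
      P k i * Q (q + m - k) (p - i + m)
      * (\<Prod>v\<in>UNIV. of_nat ((k v choose m v) * ((p - i + m) v choose m v) * fact (m v))))"

definition Sone :: "('n::finite) dop" where
  "Sone = (\<lambda>k i. if k = 0 \<and> i = 0 then 1 else 0)"

definition dscale :: "complex \<Rightarrow> ('n::finite) dop \<Rightarrow> 'n dop" where
  "dscale c P = (\<lambda>k i. c * P k i)"

definition hcomp :: "('n::finite) dop \<Rightarrow> int \<Rightarrow> 'n dop" where
  "hcomp P m = (\<lambda>k i. if int (msize i) - int (msize k) = m then P k i else 0)"

definition symb :: "('n::finite) dop \<Rightarrow> 'n dop" where
  "symb P = (\<lambda>k i. if ereal (real (msize i) - real (msize k)) = - ord P then P k i else 0)"

definition Fset :: "('n::finite) Fel set" where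
  "Fset = {w. finite {k. w k \<noteq> 0}}"

definition iotaF :: "('n::finite) Fel \<Rightarrow> 'n dop" where
  "iotaF w = (\<lambda>k i. if i = 0 then w k else 0)"

definition degF :: "('n::finite) Fel \<Rightarrow> ereal" where
  "degF w = ord (iotaF w)"

text \<open>Right S-module structure: w o P = class of w*P modulo m\<frakS>, i.e. the
  x^0-part of w*P.\<close>
definition ract :: "('n::finite) Fel \<Rightarrow> 'n dop \<Rightarrow> 'n Fel" (infixl \<open>\<circ>\<^sub>F\<close> 70) where
  "ract w P = (\<lambda>q. dmul (iotaF w) P q 0)"

definition pmul :: "('n::finite) Fel \<Rightarrow> 'n Fel \<Rightarrow> 'n Fel" where
  "pmul w f = (\<lambda>q. \<Sum>k\<in>{k. k \<le> q}. w k * f (q - k))"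

definition Fone :: "('n::finite) Fel" where
  "Fone = (\<lambda>k. if k = 0 then 1 else 0)"

definition Fscale :: "complex \<Rightarrow> ('n::finite) Fel \<Rightarrow> 'n Fel" where
  "Fscale c w = (\<lambda>k. c * w k)"

definition Fsubspace :: "('n::finite) Fel set \<Rightarrow> bool" where
  "Fsubspace W \<longleftrightarrow> W \<subseteq> Fset \<and> module.subspace Fscale W"

definition Fdim :: "('n::finite) Fel set \<Rightarrow> nat" where
  "Fdim V = vector_space.dim Fscale V"

definition Wfilt :: "('n::finite) Fel set \<Rightarrow> nat \<Rightarrow> 'n Fel set" where
  "Wfilt W k = {w \<in> W. degF w \<le> ereal (real k)}"

definition Gr :: "nat \<Rightarrow> ('n::finite) Fel set set" where
  "Gr \<mu> = {W. Fsubspace W \<and>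
     (\<forall>k::nat. Fdim (Wfilt W (\<mu> + k)) = (card (UNIV :: 'n set) + k) choose card (UNIV :: 'n set))}"

definition Fsubalgebra :: "('n::finite) Fel set \<Rightarrow> bool" where
  "Fsubalgebra A \<longleftrightarrow> A \<subseteq> Fset \<and> Fone \<in> A \<and>
     (\<forall>f\<in>A. \<forall>g\<in>A. f + g \<in> A \<and> pmul f g \<in> A) \<and> (\<forall>c. \<forall>f\<in>A. Fscale c f \<in> A)"

definition regular :: "('n::finite) dop \<Rightarrow> bool" where
  "regular P \<longleftrightarrow> P \<in> Salg \<and> inj_on (\<lambda>w. w \<circ>\<^sub>F symb P) Fset"

definition sato_op :: "nat \<Rightarrow> ('n::finite) Fel set \<Rightarrow> 'n dop \<Rightarrow> bool" where
  "sato_op \<mu> W S \<longleftrightarrow> regular S \<and> ord S = ereal (real \<mu>) \<and> W = (\<lambda>w. w \<circ>\<^sub>F S) ` Fset"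

definition LS :: "('n::finite) dop \<Rightarrow> 'n Fel \<Rightarrow> 'n dop" where
  "LS S f = (THE L. L \<in> Salg \<and> dmul S (iotaF f) = dmul L S)"

end

theory Submission
  imports Defs "HOL-Library.FuncSet"
begin

text \<open>The right action \<open>w \<circ> P\<close> of \<open>\<frakS>\<close> on \<open>F = \<frakS>/\<frakm>\<frakS>\<close> is a module action,
  \<open>(w \<circ> P) \<circ> Q = w \<circ> (P Q)\<close> (a Vandermonde computation), and an operator is determined by
  its products \<open>\<partial>\<^sup>j \<circ> L\<close> with the monomials.  Hence \<open>S f = L S\<close> holds iff
  \<open>(\<partial>\<^sup>j \<circ> L) \<circ> S = (\<partial>\<^sup>j \<circ> S) f\<close> for all \<open>j\<close>.  Regularity of \<open>S\<close> makes \<open>w \<mapsto> w \<circ> S\<close>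
  injective and raises degrees by exactly \<open>o(S)\<close>.  As \<open>W \<cdot> A \<subseteq> W = F \<circ> S\<close>, every
  \<open>(\<partial>\<^sup>j \<circ> S) f\<close> is \<open>T\<^sub>j \<circ> S\<close> for a unique \<open>T\<^sub>j\<close> of degree at most \<open>|j| + deg f\<close>, and the
  operator with \<open>\<partial>\<^sup>j \<circ> L = T\<^sub>j\<close> is \<open>L\<^sub>S(f)\<close>.  Uniqueness, the homomorphism rules and the
  intertwining property follow from the same characterisation; \<open>o(L\<^sub>S(f)) = deg f\<close> and
  injectivity follow by comparing top degrees, \<open>F\<close> being a domain.\<close>

lemma finite_mi_le: "finite {j::('n::finite) mi. j \<le> a}"
proof -
  have "{j::'n mi. j \<le> a} \<subseteq> PiE UNIV (\<lambda>v. {..a v})"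
    by (auto simp: le_fun_def PiE_def Pi_def extensional_def)
  thus ?thesis by (rule finite_subset) (auto intro: finite_PiE)
qed

lemma msize_add [simp]: "msize (a + b) = msize a + msize b"
  by (simp add: msize_def sum.distrib)

lemma msize_zero [simp]: "msize 0 = 0"
  by (simp add: msize_def)

lemma msize_diff: "b \<le> a \<Longrightarrow> msize (a - b) = msize a - msize b"
  unfolding msize_def by (simp add: sum_subtractf_nat le_fun_def)

lemma msize_mono: "a \<le> b \<Longrightarrow> msize a \<le> msize b"
  unfolding msize_def by (rule sum_mono) (simp add: le_fun_def)

lemma msize_strict_mono: "a \<le> b \<Longrightarrow> a \<noteq> b \<Longrightarrow> msize a < msize b"
proof -
  assume ab: "a \<le> b" "a \<noteq> b"
  then obtain v where "a v < b v" by (auto simp: le_fun_def order_less_le)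
  thus ?thesis unfolding msize_def using ab
    by (intro sum_strict_mono_ex1) (auto simp: le_fun_def)
qed

lemma component_le_msize: "k v \<le> msize k"
  unfolding msize_def by (rule member_le_sum) auto

lemma finite_msize_le: "finite {k::('n::finite) mi. msize k \<le> N}"
  by (rule finite_subset[OF _ finite_mi_le[of "\<lambda>_. N"]])
    (auto simp: le_fun_def intro: order_trans[OF component_le_msize])

lemma finite_mi_between: "finite {m::('n::finite) mi. m \<le> a \<and> a \<le> q + m}"
  by (rule finite_subset[OF _ finite_mi_le[of a]]) auto

section \<open>The right action of \<frakS> on F\<close>

definition Fsupp :: "('n::finite) Fel \<Rightarrow> 'n mi set" where
  "Fsupp w = {k. w k \<noteq> 0}"

definition Fmono :: "('n::finite) mi \<Rightarrow> 'n Fel" where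
  "Fmono k = (\<lambda>q. if q = k then 1 else 0)"

definition mi_ffact :: "('n::finite) mi \<Rightarrow> 'n mi \<Rightarrow> complex" where
  "mi_ffact k m = (\<Prod>v\<in>UNIV. of_nat ((k v choose m v) * fact (m v)))"

text \<open>The coefficients of \<open>Fmono a \<circ>\<^sub>F P\<close>: modulo \<open>\<frakm>\<frakS>\<close>, \<open>\<partial>\<^sup>a x\<^sup>m \<partial>\<^sup>l\<close> reduces to
  \<open>(a!/(a-m)!) \<partial>\<^sup>a\<^sup>-\<^sup>m\<^sup>+\<^sup>l\<close> if \<open>m \<le> a\<close> and to \<open>0\<close> otherwise (\<open>mi_ffact a m = a!/(a-m)!\<close>).\<close>
definition mono_ract :: "('n::finite) mi \<Rightarrow> 'n dop \<Rightarrow> 'n Fel" where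
  "mono_ract a P = (\<lambda>q. \<Sum>m\<in>{m. m \<le> a \<and> a \<le> q + m}. P (q + m - a) m * mi_ffact a m)"

lemma Fset_iff_finite_Fsupp: "w \<in> Fset \<longleftrightarrow> finite (Fsupp w)"
  by (simp add: Fset_def Fsupp_def)

lemma ract_eq_sum:
  fixes w :: "('n::finite) Fel"
  assumes "finite K" "Fsupp w \<subseteq> K"
  shows "(w \<circ>\<^sub>F P) q = (\<Sum>k\<in>K. w k * mono_ract k P q)"
proof -
  have fs: "finite (Fsupp w)" using assms finite_subset by blast
  let ?D = "{(k, i, m). i \<le> (0::'n mi) \<and> m \<le> k \<and> k \<le> q + m \<and> iotaF w k i \<noteq> 0}"
  have D: "?D = (\<lambda>(k,m). (k,0,m)) ` (SIGMA k:Fsupp w. {m. m \<le> k \<and> k \<le> q + m})"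
    by (auto simp: iotaF_def Fsupp_def le_fun_def split: if_splits)
  have inj: "inj_on (\<lambda>(k,m). (k,0::'n mi,m)) X" for X by (auto simp: inj_on_def)
  have "(w \<circ>\<^sub>F P) q = (\<Sum>(k,i,m)\<in>?D. iotaF w k i * P (q + m - k) (0 - i + m) *
      (\<Prod>v\<in>UNIV. of_nat ((k v choose m v) * ((0 - i + m) v choose m v) * fact (m v))))"
    by (simp add: ract_def dmul_def)
  also have "\<dots> = (\<Sum>(k,m)\<in>(SIGMA k:Fsupp w. {m. m \<le> k \<and> k \<le> q + m}).
      w k * (P (q + m - k) m * mi_ffact k m))"
    unfolding D by (subst sum.reindex[OF inj]) (auto intro!: sum.cong simp: iotaF_def mi_ffact_def)
  also have "\<dots> = (\<Sum>k\<in>Fsupp w. w k * mono_ract k P q)"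
    by (subst sum.Sigma[symmetric])
      (auto simp: fs finite_mi_between mono_ract_def sum_distrib_left)
  also have "\<dots> = (\<Sum>k\<in>K. w k * mono_ract k P q)"
    by (rule sum.mono_neutral_left) (use assms in \<open>auto simp: Fsupp_def\<close>)
  finally show ?thesis .
qed

lemma ract_eq_sum_Fsupp:
  "w \<in> Fset \<Longrightarrow> (w \<circ>\<^sub>F P) q = (\<Sum>k\<in>Fsupp w. w k * mono_ract k P q)"
  by (rule ract_eq_sum) (auto simp: Fset_iff_finite_Fsupp)

lemma Fmono_in_Fset: "Fmono k \<in> Fset"
  by (simp add: Fset_iff_finite_Fsupp Fsupp_def Fmono_def)

lemma ract_Fmono: "Fmono k \<circ>\<^sub>F P = mono_ract k P"
proof
  fix q
  have "(Fmono k \<circ>\<^sub>F P) q = (\<Sum>k'\<in>{k}. Fmono k k' * mono_ract k' P q)"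
    by (rule ract_eq_sum) (auto simp: Fsupp_def Fmono_def)
  thus "(Fmono k \<circ>\<^sub>F P) q = mono_ract k P q" by (simp add: Fmono_def)
qed

lemma ract_add:
  assumes "u \<in> Fset" "v \<in> Fset"
  shows "(u + v) \<circ>\<^sub>F P = u \<circ>\<^sub>F P + v \<circ>\<^sub>F P"
proof
  fix q
  let ?K = "Fsupp u \<union> Fsupp v"
  have K: "finite ?K" using assms by (simp add: Fset_iff_finite_Fsupp)
  have "((u + v) \<circ>\<^sub>F P) q = (\<Sum>k\<in>?K. (u + v) k * mono_ract k P q)"
    by (rule ract_eq_sum[OF K]) (auto simp: Fsupp_def)
  also have "\<dots> = (u \<circ>\<^sub>F P) q + (v \<circ>\<^sub>F P) q"
    by (simp add: distrib_right sum.distrib ract_eq_sum[OF K])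
  finally show "((u + v) \<circ>\<^sub>F P) q = (u \<circ>\<^sub>F P + v \<circ>\<^sub>F P) q" by simp
qed

lemma ract_Fscale:
  assumes "u \<in> Fset"
  shows "Fscale c u \<circ>\<^sub>F P = Fscale c (u \<circ>\<^sub>F P)"
proof
  fix q
  have K: "finite (Fsupp u)" using assms by (simp add: Fset_iff_finite_Fsupp)
  have "(Fscale c u \<circ>\<^sub>F P) q = (\<Sum>k\<in>Fsupp u. Fscale c u k * mono_ract k P q)"
    by (rule ract_eq_sum[OF K]) (auto simp: Fsupp_def Fscale_def)
  thus "(Fscale c u \<circ>\<^sub>F P) q = Fscale c (u \<circ>\<^sub>F P) q"
    by (simp add: ract_eq_sum[OF K] Fscale_def sum_distrib_left mult.assoc)
qed

lemma ract_zero: "0 \<circ>\<^sub>F P = 0"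
  by (rule ext, subst ract_eq_sum[of "{}"]) (auto simp: Fsupp_def)

lemma mono_ract_add: "mono_ract a (P + Q) = mono_ract a P + mono_ract a Q"
  by (rule ext) (simp add: mono_ract_def distrib_right sum.distrib)

lemma mono_ract_diff: "mono_ract a (P - Q) = mono_ract a P - mono_ract a Q"
  by (rule ext) (simp add: mono_ract_def left_diff_distrib sum_subtractf)

lemma mono_ract_dscale: "mono_ract a (dscale c P) = Fscale c (mono_ract a P)"
  by (rule ext) (simp add: mono_ract_def dscale_def Fscale_def sum_distrib_left mult.assoc)

lemma mi_ffact_self_nonzero: "mi_ffact j j \<noteq> 0"
  by (simp add: mi_ffact_def)

lemma mi_ffact_nonzero_imp_le: "mi_ffact a j \<noteq> 0 \<Longrightarrow> j \<le> a"
  unfolding mi_ffact_def le_fun_def by (auto simp: binomial_eq_0_iff) (metis not_le)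

lemma mono_ract_split:
  "mono_ract j P q = P q j * mi_ffact j j
     + (\<Sum>m\<in>{m. m \<le> j \<and> m \<noteq> j \<and> j \<le> q + m}. P (q + m - j) m * mi_ffact j m)"
proof -
  have e: "{m. m \<le> j \<and> j \<le> q + m} = insert j {m. m \<le> j \<and> m \<noteq> j \<and> j \<le> q + m}"
    by (auto simp: le_fun_def)
  have f: "finite {m. m \<le> j \<and> m \<noteq> j \<and> j \<le> q + m}"
    by (rule finite_subset[OF _ finite_mi_le[of j]]) auto
  show ?thesis unfolding mono_ract_def e by (subst sum.insert[OF f]) auto
qed

lemma mono_ract_zero:
  fixes P :: "('n::finite) dop"
  shows "mono_ract 0 P q = P q 0"
proof -
  have "{m. m \<le> 0 \<and> 0 \<le> q + m} = {0::'n mi}" by (auto simp: le_fun_def fun_eq_iff)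
  thus ?thesis by (simp add: mono_ract_def mi_ffact_def)
qed

text \<open>The system of \<open>mono_ract_split\<close> is triangular: \<open>P q j\<close> is determined by induction on \<open>|j|\<close>.\<close>
lemma dop_eqI_mono_ract:
  fixes P Q :: "('n::finite) dop"
  assumes "\<And>a. mono_ract a P = mono_ract a Q"
  shows "P = Q"
proof -
  let ?D = "P - Q"
  have z: "mono_ract a ?D = 0" for a using assms by (simp add: mono_ract_diff)
  have "\<forall>q. ?D q j = 0" for j
  proof (induction j rule: measure_induct_rule[of msize])
    case (less j)
    show ?case
    proof
      fix q
      have "(\<Sum>m\<in>{m. m \<le> j \<and> m \<noteq> j \<and> j \<le> q + m}. ?D (q + m - j) m * mi_ffact j m) = 0"
        using less msize_strict_mono by (intro sum.neutral) auto
      with mono_ract_split[of j ?D q] z[of j] have "?D q j * mi_ffact j j = 0"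
        by (simp add: fun_eq_iff)
      thus "?D q j = 0" using mi_ffact_self_nonzero[of j] by auto
    qed
  qed
  thus ?thesis by (simp add: fun_eq_iff)
qed

definition deg_le :: "('n::finite) Fel \<Rightarrow> nat \<Rightarrow> bool" where
  "deg_le w N \<longleftrightarrow> (\<forall>q. w q \<noteq> 0 \<longrightarrow> msize q \<le> N)"

definition ord_le :: "('n::finite) dop \<Rightarrow> nat \<Rightarrow> bool" where
  "ord_le P d \<longleftrightarrow> (\<forall>k i. P k i \<noteq> 0 \<longrightarrow> msize k \<le> msize i + d)"

lemma deg_le_imp_Fset: "deg_le w N \<Longrightarrow> w \<in> Fset"
  unfolding Fset_def deg_le_def mem_Collect_eq
  by (rule finite_subset[OF _ finite_msize_le[of N]]) auto

lemma Fset_imp_deg_le: "w \<in> Fset \<Longrightarrow> \<exists>N. deg_le w N"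
  unfolding deg_le_def Fset_iff_finite_Fsupp
  by (rule exI[of _ "Max (msize ` Fsupp w)"]) (auto simp: Fsupp_def intro: Max_ge)

lemma ord_ge_coeff: "P k i \<noteq> 0 \<Longrightarrow> ereal (real (msize k) - real (msize i)) \<le> ord P"
  unfolding ord_def by (rule Sup_upper) auto

lemma ord_le_iff: "ord_le P d \<longleftrightarrow> ord P \<le> ereal (real d)"
proof
  assume P: "ord_le P d"
  show "ord P \<le> ereal (real d)"
    unfolding ord_def
  proof (rule Sup_least, clarsimp)
    fix k i assume "P k i \<noteq> 0"
    hence "msize k \<le> msize i + d" using P by (simp add: ord_le_def)
    thus "real (msize k) - real (msize i) \<le> real d" by simp
  qed
next
  assume le: "ord P \<le> ereal (real d)"
  show "ord_le P d" unfolding ord_le_def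
  proof (intro allI impI)
    fix k i assume "P k i \<noteq> 0"
    with le have "ereal (real (msize k) - real (msize i)) \<le> ereal (real d)"
      using ord_ge_coeff order_trans by blast
    thus "msize k \<le> msize i + d" by simp
  qed
qed

lemma ord_le_imp_Salg: "ord_le P d \<Longrightarrow> P \<in> Salg"
  by (auto simp: Salg_def ord_le_iff)

lemma Salg_imp_ord_le: "P \<in> Salg \<Longrightarrow> \<exists>d. ord_le P d"
proof -
  assume "P \<in> Salg"
  then obtain r where r: "ord P \<le> ereal r" by (cases "ord P") (auto simp: Salg_def)
  have "ord P \<le> ereal (real (nat \<lceil>r\<rceil>))"
    by (rule order_trans[OF r]) (simp add: real_nat_ceiling_ge)
  thus ?thesis using ord_le_iff by blast
qed

lemma deg_le_mono_ract: "ord_le P d \<Longrightarrow> deg_le (mono_ract a P) (msize a + d)"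
  unfolding deg_le_def
proof (intro allI impI)
  fix q assume P: "ord_le P d" and nz: "mono_ract a P q \<noteq> 0"
  from nz obtain m where m: "m \<le> a" "a \<le> q + m" "P (q + m - a) m \<noteq> 0"
    unfolding mono_ract_def by (rule sum.not_neutral_contains_not_neutral) auto
  have "msize (q + m - a) \<le> msize m + d" using m P by (auto simp: ord_le_def)
  thus "msize q \<le> msize a + d" using m by (simp add: msize_diff)
qed

lemma mono_ract_in_Fset: "ord_le P d \<Longrightarrow> mono_ract a P \<in> Fset"
  using deg_le_mono_ract deg_le_imp_Fset by blast

lemma deg_le_ract:
  assumes "w \<in> Fset" "deg_le w N" "ord_le P d"
  shows "deg_le (w \<circ>\<^sub>F P) (N + d)"
  unfolding deg_le_def
proof (intro allI impI)
  fix q assume "(w \<circ>\<^sub>F P) q \<noteq> 0"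
  then obtain k where k: "k \<in> Fsupp w" "mono_ract k P q \<noteq> 0"
    unfolding ract_eq_sum_Fsupp[OF assms(1)] by (rule sum.not_neutral_contains_not_neutral) auto
  have "msize k \<le> N" using k assms(2) by (auto simp: deg_le_def Fsupp_def)
  moreover have "msize q \<le> msize k + d"
    using deg_le_mono_ract[OF assms(3), of k] k by (auto simp: deg_le_def)
  ultimately show "msize q \<le> N + d" by simp
qed

lemma ract_in_Fset: "w \<in> Fset \<Longrightarrow> P \<in> Salg \<Longrightarrow> w \<circ>\<^sub>F P \<in> Fset"
  using Fset_imp_deg_le Salg_imp_ord_le deg_le_ract deg_le_imp_Fset by metis

section \<open>The action is a module action\<close>

lemma choose_fact_add:
  "(a choose (j + t)) * fact (j + t) = (a choose j) * fact j * (((a - j) choose t) * fact t :: nat)"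
proof (cases "j + t \<le> a")
  case True
  have "fact (j + t) * fact (a - (j + t)) * (a choose (j + t)) = (fact a :: nat)"
    using binomial_fact_lemma[OF True] .
  moreover have "fact j * fact (a - j) * (a choose j) = (fact a :: nat)"
    using binomial_fact_lemma[of j a] True by simp
  moreover have "fact t * fact (a - j - t) * ((a - j) choose t) = (fact (a - j) :: nat)"
    using binomial_fact_lemma[of t "a - j"] True by simp
  ultimately have "(a choose (j + t)) * fact (j + t) * fact (a - j - t) =
      (a choose j) * fact j * (((a - j) choose t) * fact t) * fact (a - j - t)"
    by (metis diff_diff_left mult.commute mult.left_commute)
  thus ?thesis by simp
next
  case False
  thus ?thesis by (cases "j \<le> a") (auto simp: binomial_eq_0)
qed

lemma falling_factorial_vandermonde:
  "(\<Sum>x\<le>l. (l choose x) * (j' choose x) * fact x * ((a choose (j + j' - x)) * fact (j + j' - x)))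
    = (a choose j) * fact j * (((a - j + l) choose j') * fact j' :: nat)"
proof (cases "j \<le> a")
  case False
  have "(l choose x) * (j' choose x) * fact x * ((a choose (j + j' - x)) * fact (j + j' - x)) = 0" for x
    using False by (cases "x \<le> j'") (auto simp: binomial_eq_0)
  hence "(\<Sum>x\<le>l. (l choose x) * (j' choose x) * fact x * ((a choose (j + j' - x)) * fact (j + j' - x))) = 0"
    by (intro sum.neutral) blast
  thus ?thesis using False by (simp add: binomial_eq_0)
next
  case True
  define A where "A = a - j"
  have summand: "(l choose x) * (j' choose x) * fact x * ((a choose (j + j' - x)) * fact (j + j' - x))
      = (a choose j) * fact j * fact j' * ((l choose x) * (if x \<le> j' then A choose (j' - x) else 0))"
    for x
  proof (cases "x \<le> j'")
    case True
    have "(a choose (j + j' - x)) * fact (j + j' - x) = (a choose j) * fact j * ((A choose (j' - x)) * fact (j' - x))"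
      using choose_fact_add[of a j "j' - x"] True by (simp add: A_def)
    moreover have "(j' choose x) * fact x * fact (j' - x) = fact j'"
      using binomial_fact_lemma[OF True] by (simp add: mult.commute mult.left_commute)
    ultimately show ?thesis using True by (simp add: algebra_simps)
  qed simp
  have "(\<Sum>x\<le>l. (l choose x) * (if x \<le> j' then A choose (j' - x) else 0))
      = (\<Sum>x\<le>l + j'. (l choose x) * (if x \<le> j' then A choose (j' - x) else 0))"
    by (rule sum.mono_neutral_left) auto
  also have "\<dots> = (\<Sum>x\<le>j'. (l choose x) * (A choose (j' - x)))"
    by (rule sum.mono_neutral_cong_right) auto
  also have "\<dots> = (l + A) choose j'" by (rule vandermonde)
  finally have "(\<Sum>x\<le>l. (l choose x) * (if x \<le> j' then A choose (j' - x) else 0)) = (a - j + l) choose j'"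
    by (simp add: A_def add.commute)
  thus ?thesis unfolding summand sum_distrib_left[symmetric] by (simp add: algebra_simps)
qed

definition leibniz_coeff :: "('n::finite) mi \<Rightarrow> 'n mi \<Rightarrow> 'n mi \<Rightarrow> complex" where
  "leibniz_coeff k m j = (\<Prod>v\<in>UNIV. of_nat ((k v choose m v) * (j v choose m v) * fact (m v)))"

lemma leibniz_coeff_nonzero_imp_le: "leibniz_coeff k m j \<noteq> 0 \<Longrightarrow> m \<le> j"
  unfolding leibniz_coeff_def le_fun_def by (auto simp: binomial_eq_0_iff) (metis not_le)

lemma mi_le_eq_PiE: "{m::('n::finite) mi. m \<le> l} = PiE UNIV (\<lambda>v. {..l v})"
  by (auto simp: le_fun_def PiE_def Pi_def extensional_def)

lemma mi_ffact_vandermonde: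
  fixes l j j' a :: "('n::finite) mi"
  shows "(\<Sum>m\<in>{m. m \<le> l}. leibniz_coeff l m j' * mi_ffact a (j + j' - m))
    = mi_ffact a j * mi_ffact (a - j + l) j'"
proof -
  define G where "G v x = (l v choose x) * (j' v choose x) * fact x
      * ((a v choose (j v + j' v - x)) * fact (j v + j' v - x))" for v x
  have "(\<Sum>m\<in>{m. m \<le> l}. leibniz_coeff l m j' * mi_ffact a (j + j' - m))
      = (\<Sum>m\<in>PiE UNIV (\<lambda>v. {..l v}). \<Prod>v\<in>UNIV. (of_nat (G v (m v)) :: complex))"
    unfolding mi_le_eq_PiE
    by (simp add: leibniz_coeff_def mi_ffact_def G_def prod.distrib[symmetric] mult.assoc)
  also have "\<dots> = (\<Prod>v\<in>UNIV. \<Sum>x\<le>l v. (of_nat (G v x) :: complex))"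
    by (rule prod_sum_PiE[symmetric]) auto
  also have "\<dots> = (\<Prod>v\<in>UNIV. of_nat ((a v choose j v) * fact (j v))
      * of_nat (((a v - j v + l v) choose j' v) * fact (j' v)))"
    unfolding of_nat_sum[symmetric] G_def falling_factorial_vandermonde by simp
  also have "\<dots> = mi_ffact a j * mi_ffact (a - j + l) j'"
    by (simp add: mi_ffact_def prod.distrib)
  finally show ?thesis .
qed

lemma sum_eq_by_nonzero_bij:
  fixes g :: "'a \<Rightarrow> 'c::comm_monoid_add" and h :: "'b \<Rightarrow> 'c"
  assumes "finite S" "finite T"
    and "\<And>x. x \<in> S \<Longrightarrow> g x \<noteq> 0 \<Longrightarrow> j x \<in> T \<and> i (j x) = x \<and> h (j x) = g x"
    and "\<And>y. y \<in> T \<Longrightarrow> h y \<noteq> 0 \<Longrightarrow> i y \<in> S \<and> j (i y) = y \<and> g (i y) = h y"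
  shows "sum g S = sum h T"
proof -
  have "sum g S = sum g {x\<in>S. g x \<noteq> 0}"
    by (rule sum.mono_neutral_right) (use assms in auto)
  also have "\<dots> = sum h {y\<in>T. h y \<noteq> 0}"
    by (rule sum.reindex_bij_witness[of _ i j]) (use assms in auto)
  also have "\<dots> = sum h T"
    by (rule sum.mono_neutral_left) (use assms in auto)
  finally show ?thesis .
qed

text \<open>Both sides of \<open>(\<partial>\<^sup>a \<circ> P) \<circ> Q = \<partial>\<^sup>a \<circ> (P Q)\<close> expand, at \<open>\<partial>\<^sup>q\<close>, to the sum of these terms
  over pairs of monomials \<open>x\<^sup>j \<partial>\<^sup>l\<close> of \<open>P\<close> and \<open>x\<^sup>j\<^sup>' \<partial>\<^sup>l\<^sup>'\<close> of \<open>Q\<close>; the box is a finite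
  region containing all nonzero terms when \<open>o(P) \<le> dP\<close> and \<open>o(Q) \<le> dQ\<close>.\<close>
definition assoc_term ::
    "('n::finite) dop \<Rightarrow> 'n dop \<Rightarrow> 'n mi \<Rightarrow> 'n mi \<Rightarrow> 'n mi \<times> 'n mi \<times> 'n mi \<times> 'n mi \<Rightarrow> complex" where
  "assoc_term P Q a q = (\<lambda>(l, j, l', j'). if a + l + l' = q + j + j'
     then P l j * Q l' j' * (mi_ffact a j * mi_ffact (a - j + l) j') else 0)"

definition assoc_box :: "('n::finite) mi \<Rightarrow> nat \<Rightarrow> nat \<Rightarrow> ('n mi \<times> 'n mi \<times> 'n mi \<times> 'n mi) set" where
  "assoc_box a dP dQ = {l. msize l \<le> msize a + dP} \<times> {j. j \<le> a}
     \<times> {l'. msize l' \<le> msize a + dP + dQ} \<times> {j'. msize j' \<le> msize a + dP}"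

lemma finite_assoc_box: "finite (assoc_box a dP dQ)"
  unfolding assoc_box_def by (intro finite_cartesian_product finite_msize_le finite_mi_le)

lemma ract_mono_ract_eq_assoc_sum:
  fixes P Q :: "('n::finite) dop"
  assumes P: "ord_le P dP" and Q: "ord_le Q dQ"
  shows "(mono_ract a P \<circ>\<^sub>F Q) q = sum (assoc_term P Q a q) (assoc_box a dP dQ)"
proof -
  define K where "K = {k::'n mi. msize k \<le> msize a + dP}"
  define Sig where "Sig = (SIGMA k:K. {j. j \<le> a \<and> a \<le> k + j} \<times> {m. m \<le> k \<and> k \<le> q + m})"
  have finK: "finite K" unfolding K_def by (rule finite_msize_le)
  have finSig: "finite Sig" unfolding Sig_def
    by (intro finite_SigmaI finK finite_cartesian_product finite_mi_between)
  define g where "g = (\<lambda>(k, j, m). P (k + j - a) j * mi_ffact a j * (Q (q + m - k) m * mi_ffact k m))"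
  have "(mono_ract a P \<circ>\<^sub>F Q) q = (\<Sum>k\<in>K. mono_ract a P k * mono_ract k Q q)"
    by (rule ract_eq_sum[OF finK])
      (use deg_le_mono_ract[OF P, of a] in \<open>auto simp: Fsupp_def deg_le_def K_def\<close>)
  also have "\<dots> = (\<Sum>k\<in>K. \<Sum>(j, m)\<in>{j. j \<le> a \<and> a \<le> k + j} \<times> {m. m \<le> k \<and> k \<le> q + m}. g (k, j, m))"
    by (simp add: mono_ract_def g_def sum_product sum.cartesian_product)
  also have "\<dots> = sum g Sig"
    unfolding Sig_def by (subst sum.Sigma) (auto intro: finK finite_cartesian_product finite_mi_between)
  also have "\<dots> = sum (assoc_term P Q a q) (assoc_box a dP dQ)"
  proof (rule sum_eq_by_nonzero_bij[OF finSig finite_assoc_box,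
        where j="\<lambda>(k, j, m). (k + j - a, j, q + m - k, m)" and i="\<lambda>(l, j, l', j'). (a - j + l, j, j')"])
    fix x assume x: "x \<in> Sig" "g x \<noteq> 0"
    then obtain k j m where xe: "x = (k, j, m)" and k: "msize k \<le> msize a + dP"
      and h: "j \<le> a" "a \<le> k + j" "m \<le> k" "k \<le> q + m"
      by (auto simp: Sig_def K_def)
    have nz: "P (k + j - a) j \<noteq> 0" "Q (q + m - k) m \<noteq> 0" using x(2) by (auto simp: g_def xe)
    have e1: "a - j + (k + j - a) = k" and e2: "a + (k + j - a) + (q + m - k) = q + j + m"
      using h by (simp_all add: le_fun_def fun_eq_iff)
    have "msize (k + j - a) \<le> msize j + dP" "msize (q + m - k) \<le> msize m + dQ"
      using P Q nz by (auto simp: ord_le_def)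
    moreover have "msize j \<le> msize a" "msize m \<le> msize k" using h by (auto intro: msize_mono)
    ultimately have "(k + j - a, j, q + m - k, m) \<in> assoc_box a dP dQ"
      using k h by (auto simp: assoc_box_def)
    thus "(case x of (k, j, m) \<Rightarrow> (k + j - a, j, q + m - k, m)) \<in> assoc_box a dP dQ \<and>
      (case (case x of (k, j, m) \<Rightarrow> (k + j - a, j, q + m - k, m)) of (l, j, l', j') \<Rightarrow> (a - j + l, j, j')) = x \<and>
      assoc_term P Q a q (case x of (k, j, m) \<Rightarrow> (k + j - a, j, q + m - k, m)) = g x"
      by (simp add: xe e1 e2 assoc_term_def g_def)
  next
    fix y assume y: "y \<in> assoc_box a dP dQ" "assoc_term P Q a q y \<noteq> 0"
    obtain l j l' j' where ye: "y = (l, j, l', j')" by (cases y) auto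
    have c: "a + l + l' = q + j + j'"
      and nz: "P l j \<noteq> 0" "Q l' j' \<noteq> 0" "mi_ffact a j \<noteq> 0" "mi_ffact (a - j + l) j' \<noteq> 0"
      using y(2) by (auto simp: assoc_term_def ye split: if_splits)
    have h: "j \<le> a" "j' \<le> a - j + l" using nz mi_ffact_nonzero_imp_le by auto
    have "a v \<le> (a - j + l + j) v" "(a - j + l) v \<le> (q + j') v"
      "(a - j + l + j - a) v = l v" "(q + j' - (a - j + l)) v = l' v" for v
      using fun_cong[OF c, of v] le_funD[OF h(1), of v] le_funD[OF h(2), of v] by auto
    hence g1: "a \<le> a - j + l + j" and g2: "a - j + l \<le> q + j'"
      and g3: "a - j + l + j - a = l" and g4: "q + j' - (a - j + l) = l'"
      by (simp_all add: le_fun_def fun_eq_iff)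
    have "msize l \<le> msize j + dP" using P nz by (auto simp: ord_le_def)
    moreover have "msize j \<le> msize a" by (rule msize_mono[OF h(1)])
    ultimately have "msize (a - j + l) \<le> msize a + dP" using h by (simp add: msize_diff)
    hence "(a - j + l, j, j') \<in> Sig" using h g1 g2 by (auto simp: Sig_def K_def)
    thus "(case y of (l, j, l', j') \<Rightarrow> (a - j + l, j, j')) \<in> Sig \<and>
      (case (case y of (l, j, l', j') \<Rightarrow> (a - j + l, j, j')) of (k, j, m) \<Rightarrow> (k + j - a, j, q + m - k, m)) = y \<and>
      g (case y of (l, j, l', j') \<Rightarrow> (a - j + l, j, j')) = assoc_term P Q a q y"
      by (simp add: ye g3 g4 c assoc_term_def g_def)
  qed
  finally show ?thesis .
qed

lemma mono_ract_dmul_eq_sum_Sigma: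
  fixes P Q :: "('n::finite) dop"
  assumes P: "ord_le P dP" and Q: "ord_le Q dQ"
  shows "mono_ract a (dmul P Q) q = (\<Sum>((l, j, l', j'), m) \<in> (SIGMA x:assoc_box a dP dQ. {m. m \<le> fst x}).
      if a + l + l' = q + j + j' then P l j * Q l' j' * (leibniz_coeff l m j' * mi_ffact a (j + j' - m)) else 0)"
    (is "_ = sum ?t ?Y")
proof -
  define Mp where "Mp = {p::'n mi. p \<le> a \<and> a \<le> q + p}"
  define D where "D p = {(k, i, m). i \<le> p \<and> m \<le> k \<and> k \<le> (q + p - a) + m \<and> P k i \<noteq> 0}" for p
  have finD: "finite (D p)" for p
  proof (rule finite_subset)
    show "D p \<subseteq> {k. msize k \<le> msize p + dP} \<times> {i. i \<le> p} \<times> {m. msize m \<le> msize p + dP}"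
    proof (clarsimp simp: D_def)
      fix k i m assume h: "i \<le> p" "m \<le> k" "P k i \<noteq> 0"
      have "msize k \<le> msize i + dP" using P h by (auto simp: ord_le_def)
      moreover have "msize i \<le> msize p" "msize m \<le> msize k" using h msize_mono by auto
      ultimately show "msize k \<le> msize p + dP \<and> msize m \<le> msize p + dP" by linarith
    qed
  qed (intro finite_cartesian_product finite_msize_le finite_mi_le)
  have finS: "finite (SIGMA p:Mp. D p)" unfolding Mp_def by (intro finite_SigmaI finite_mi_between finD)
  have finY: "finite ?Y" by (intro finite_SigmaI finite_assoc_box finite_mi_le)
  define g where "g = (\<lambda>(p, k, i, m). P k i * Q (q + p - a + m - k) (p - i + m)
      * leibniz_coeff k m (p - i + m) * mi_ffact a p)"
  define jf where "jf = (\<lambda>(p::'n mi, k::'n mi, i::'n mi, m::'n mi). ((k, i, q + p - a + m - k, p - i + m), m))"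
  define ib where "ib = (\<lambda>((l::'n mi, j::'n mi, l'::'n mi, j'::'n mi), m::'n mi). (j + j' - m, l, j, m))"
  have fw: "jf x \<in> ?Y \<and> ib (jf x) = x \<and> ?t (jf x) = g x"
    if x: "x \<in> (SIGMA p:Mp. D p)" "g x \<noteq> 0" for x
  proof -
    obtain p k i m where xe: "x = (p, k, i, m)"
      and h: "p \<le> a" "a \<le> q + p" "i \<le> p" "m \<le> k" "k \<le> q + p - a + m" and Pn: "P k i \<noteq> 0"
      using x(1) by (auto simp: Mp_def D_def)
    have Qn: "Q (q + p - a + m - k) (p - i + m) \<noteq> 0" using x(2) by (auto simp: g_def xe)
    have "(i + (p - i + m) - m) v = p v" "(a + k + (q + p - a + m - k)) v = (q + i + (p - i + m)) v" for v
      using le_funD[OF h(1), of v] le_funD[OF h(2), of v] le_funD[OF h(3), of v]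
        le_funD[OF h(4), of v] le_funD[OF h(5), of v] by auto
    hence e1: "i + (p - i + m) - m = p" and e2: "a + k + (q + p - a + m - k) = q + i + (p - i + m)"
      by (simp_all add: fun_eq_iff)
    have "msize k \<le> msize i + dP" using P Pn by (auto simp: ord_le_def)
    moreover have "msize i \<le> msize p" "msize p \<le> msize a" "msize m \<le> msize k"
      using h msize_mono by auto
    moreover have "msize (p - i + m) = msize p - msize i + msize m" using h by (simp add: msize_diff)
    moreover have "msize (q + p - a + m - k) \<le> msize (p - i + m) + dQ"
      using Q Qn unfolding ord_le_def by blast
    ultimately have "((k, i, q + p - a + m - k, p - i + m), m) \<in> ?Y"
      using h order_trans[OF h(3,1)] by (auto simp: assoc_box_def)
    thus ?thesis by (simp add: xe e1 e2 g_def jf_def ib_def)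
  qed
  have bw: "ib y \<in> (SIGMA p:Mp. D p) \<and> jf (ib y) = y \<and> g (ib y) = ?t y"
    if y: "y \<in> ?Y" "?t y \<noteq> 0" for y
  proof -
    obtain l j l' j' m where ye: "y = ((l, j, l', j'), m)" and ml: "m \<le> l"
      using y(1) by (auto simp: assoc_box_def)
    have c: "a + l + l' = q + j + j'"
      and nz: "P l j \<noteq> 0" "Q l' j' \<noteq> 0" "leibniz_coeff l m j' \<noteq> 0" "mi_ffact a (j + j' - m) \<noteq> 0"
      using y(2) by (auto simp: ye split: if_splits)
    have h: "m \<le> j'" "j + j' - m \<le> a"
      using nz leibniz_coeff_nonzero_imp_le mi_ffact_nonzero_imp_le by auto
    have "a v \<le> (q + (j + j' - m)) v" "j v \<le> (j + j' - m) v" "l v \<le> (q + (j + j' - m) - a + m) v"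
      "(q + (j + j' - m) - a + m - l) v = l' v" "(j + j' - m - j + m) v = j' v" for v
      using fun_cong[OF c, of v] le_funD[OF h(1), of v] le_funD[OF h(2), of v] le_funD[OF ml, of v]
      by auto
    hence g1: "a \<le> q + (j + j' - m)" and g2: "j \<le> j + j' - m" and g3: "l \<le> q + (j + j' - m) - a + m"
      and g4: "q + (j + j' - m) - a + m - l = l'" and g5: "j + j' - m - j + m = j'"
      by (simp_all add: le_fun_def fun_eq_iff)
    have "(j + j' - m, l, j, m) \<in> (SIGMA p:Mp. D p)"
      using h g1 g2 g3 ml nz by (auto simp: Mp_def D_def)
    thus ?thesis by (simp add: ye g4 g5 c g_def jf_def ib_def)
  qed
  have "mono_ract a (dmul P Q) q = (\<Sum>p\<in>Mp. \<Sum>(k, i, m)\<in>D p. g (p, k, i, m))"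
    unfolding mono_ract_def Mp_def
    by (rule sum.cong[OF refl])
      (simp add: dmul_def D_def g_def leibniz_coeff_def sum_distrib_right case_prod_beta)
  also have "\<dots> = sum g (SIGMA p:Mp. D p)"
    by (subst sum.Sigma) (auto simp: Mp_def intro: finD finite_mi_between)
  also have "\<dots> = sum ?t ?Y" by (rule sum_eq_by_nonzero_bij[OF finS finY fw bw])
  finally show ?thesis .
qed

lemma mono_ract_dmul_eq_assoc_sum:
  fixes P Q :: "('n::finite) dop"
  assumes "ord_le P dP" "ord_le Q dQ"
  shows "mono_ract a (dmul P Q) q = sum (assoc_term P Q a q) (assoc_box a dP dQ)"
proof -
  define t where "t = (\<lambda>((l, j, l', j'), m). if a + l + l' = q + j + j'
    then P l j * Q l' j' * (leibniz_coeff l m j' * mi_ffact a (j + j' - m)) else 0)"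
  have "mono_ract a (dmul P Q) q = sum t (SIGMA x:assoc_box a dP dQ. {m. m \<le> fst x})"
    unfolding t_def by (rule mono_ract_dmul_eq_sum_Sigma[OF assms])
  also have "\<dots> = (\<Sum>x\<in>assoc_box a dP dQ. \<Sum>m\<in>{m. m \<le> fst x}. t (x, m))"
    by (subst sum.Sigma) (auto intro: finite_assoc_box finite_mi_le)
  also have "\<dots> = sum (assoc_term P Q a q) (assoc_box a dP dQ)"
  proof (rule sum.cong[OF refl])
    fix x :: "'n mi \<times> 'n mi \<times> 'n mi \<times> 'n mi"
    obtain l j l' j' where "x = (l, j, l', j')" by (cases x) auto
    thus "(\<Sum>m\<in>{m. m \<le> fst x}. t (x, m)) = assoc_term P Q a q x"
      using mi_ffact_vandermonde[of l j' a j]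
      by (simp add: t_def assoc_term_def sum_distrib_left[symmetric] mult.assoc)
  qed
  finally show ?thesis .
qed

lemma ract_dmul:
  fixes P Q :: "('n::finite) dop"
  assumes w: "w \<in> Fset" and P: "ord_le P dP" and Q: "ord_le Q dQ"
  shows "(w \<circ>\<^sub>F P) \<circ>\<^sub>F Q = w \<circ>\<^sub>F dmul P Q"
proof
  fix q
  define K where "K = Fsupp (w \<circ>\<^sub>F P) \<union> (\<Union>k\<in>Fsupp w. Fsupp (mono_ract k P))"
  have fw: "finite (Fsupp w)" using w by (simp add: Fset_iff_finite_Fsupp)
  have finK: "finite K" unfolding K_def
    using ract_in_Fset[OF w ord_le_imp_Salg[OF P]] fw mono_ract_in_Fset[OF P]
    by (auto simp: Fset_iff_finite_Fsupp)
  have mono: "(mono_ract k P \<circ>\<^sub>F Q) q = mono_ract k (dmul P Q) q" for k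
    using ract_mono_ract_eq_assoc_sum[OF P Q] mono_ract_dmul_eq_assoc_sum[OF P Q] by simp
  have "((w \<circ>\<^sub>F P) \<circ>\<^sub>F Q) q = (\<Sum>k'\<in>K. (w \<circ>\<^sub>F P) k' * mono_ract k' Q q)"
    by (rule ract_eq_sum[OF finK]) (auto simp: K_def)
  also have "\<dots> = (\<Sum>k\<in>Fsupp w. w k * (\<Sum>k'\<in>K. mono_ract k P k' * mono_ract k' Q q))"
    by (simp add: ract_eq_sum_Fsupp[OF w] sum_distrib_right sum_distrib_left mult.assoc sum.swap[of _ K])
  also have "\<dots> = (\<Sum>k\<in>Fsupp w. w k * (mono_ract k P \<circ>\<^sub>F Q) q)"
  proof (rule sum.cong[OF refl])
    fix k assume "k \<in> Fsupp w"
    hence "Fsupp (mono_ract k P) \<subseteq> K" by (auto simp: K_def)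
    thus "w k * (\<Sum>k'\<in>K. mono_ract k P k' * mono_ract k' Q q) = w k * (mono_ract k P \<circ>\<^sub>F Q) q"
      using ract_eq_sum[OF finK, of "mono_ract k P" Q q] by simp
  qed
  also have "\<dots> = (w \<circ>\<^sub>F dmul P Q) q"
    by (simp add: mono ract_eq_sum_Fsupp[OF w])
  finally show "((w \<circ>\<^sub>F P) \<circ>\<^sub>F Q) q = (w \<circ>\<^sub>F dmul P Q) q" .
qed

lemma mono_ract_iotaF: "mono_ract k (iotaF f) q = (if k \<le> q then f (q - k) else 0)"
proof -
  have "mono_ract k (iotaF f) q = (\<Sum>m\<in>{m. m \<le> k \<and> k \<le> q + m}. if m = 0 then f (q - k) else 0)"
    unfolding mono_ract_def iotaF_def by (rule sum.cong) (auto simp: mi_ffact_def)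
  thus ?thesis by (simp add: sum.delta[OF finite_mi_between])
qed

lemma ract_iotaF:
  assumes "w \<in> Fset"
  shows "w \<circ>\<^sub>F iotaF f = pmul w f"
proof
  fix q
  have K: "finite (Fsupp w \<union> {k. k \<le> q})" using assms finite_mi_le by (auto simp: Fset_iff_finite_Fsupp)
  have "(w \<circ>\<^sub>F iotaF f) q = (\<Sum>k\<in>Fsupp w \<union> {k. k \<le> q}. w k * mono_ract k (iotaF f) q)"
    by (rule ract_eq_sum[OF K]) auto
  also have "\<dots> = (\<Sum>k\<in>{k. k \<le> q}. w k * mono_ract k (iotaF f) q)"
    by (rule sum.mono_neutral_right) (use K in \<open>auto simp: mono_ract_iotaF Fsupp_def\<close>)
  finally show "(w \<circ>\<^sub>F iotaF f) q = pmul w f q" by (simp add: pmul_def mono_ract_iotaF)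
qed

lemma ord_le_iotaF: "deg_le f N \<Longrightarrow> ord_le (iotaF f) N"
  by (auto simp: ord_le_def deg_le_def iotaF_def)

lemma degF_eq_top_degree:
  fixes f :: "('n::finite) Fel"
  assumes "f k \<noteq> 0" "deg_le f (msize k)"
  shows "degF f = ereal (real (msize k))"
proof (rule order.antisym)
  show "degF f \<le> ereal (real (msize k))"
    unfolding degF_def ord_le_iff[symmetric] using assms(2) by (rule ord_le_iotaF)
  have "ereal (real (msize k) - real (msize (0::'n mi))) \<le> degF f"
    unfolding degF_def by (rule ord_ge_coeff) (simp add: iotaF_def assms(1))
  thus "ereal (real (msize k)) \<le> degF f" by simp
qed

lemma mono_ract_Sone: "mono_ract j Sone = Fmono j"
proof
  fix q
  have "mono_ract j Sone q = (\<Sum>m\<in>{m. m \<le> j \<and> j \<le> q + m}. if m = 0 then (if q - j = 0 then 1 else 0) else 0)"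
    unfolding mono_ract_def Sone_def by (rule sum.cong) (auto simp: mi_ffact_def)
  also have "\<dots> = (if j \<le> q then (if q - j = 0 then 1 else 0) else 0)"
    by (subst sum.delta[OF finite_mi_between]) simp
  also have "\<dots> = Fmono j q"
    unfolding Fmono_def le_fun_def fun_eq_iff fun_diff_def by (auto intro: order.antisym)
  finally show "mono_ract j Sone q = Fmono j q" .
qed

lemma ord_le_Sone: "ord_le Sone 0"
  by (auto simp: ord_le_def Sone_def)

lemma pmul_Fone: "pmul w Fone = w"
proof
  fix q
  have "pmul w Fone q = (\<Sum>k\<in>{k. k \<le> q}. if k = q then w k else 0)"
    unfolding pmul_def Fone_def
    by (rule sum.cong) (auto simp: le_fun_def fun_eq_iff intro: order.antisym)
  thus "pmul w Fone q = w q" by (simp add: sum.delta[OF finite_mi_le])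
qed

lemma pmul_add: "pmul w (f + g) = pmul w f + pmul w g"
  by (rule ext) (simp add: pmul_def distrib_left sum.distrib)

lemma pmul_diff: "pmul w (f - g) = pmul w f - pmul w g"
  by (rule ext) (simp add: pmul_def right_diff_distrib sum_subtractf)

lemma pmul_Fscale: "pmul w (Fscale c f) = Fscale c (pmul w f)"
  by (rule ext) (simp add: pmul_def Fscale_def sum_distrib_left mult.left_commute)

lemma pmul_assoc: "pmul (pmul u f) g = pmul u (pmul f (g::('n::finite) Fel))"
proof
  fix q
  let ?I = "SIGMA k:{k::'n mi. k \<le> q}. {i. i \<le> k}" and ?J = "SIGMA i:{i. i \<le> q}. {l. l \<le> q - i}"
  have "pmul (pmul u f) g q = (\<Sum>(k, i)\<in>?I. u i * f (k - i) * g (q - k))"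
    unfolding pmul_def sum_distrib_right by (rule sum.Sigma) (auto simp: finite_mi_le)
  also have "\<dots> = (\<Sum>(i, l)\<in>?J. u i * (f l * g (q - i - l)))"
  proof (rule sum.reindex_bij_witness[where j="\<lambda>(k, i). (i, k - i)" and i="\<lambda>(i, l). (i + l, i)"])
    fix x assume "x \<in> ?I"
    then obtain k i where x: "x = (k, i)" "k \<le> q" "i \<le> k" by auto
    have "(i + (k - i)) v = k v" "i v \<le> q v" "(k - i) v \<le> (q - i) v" "(q - i - (k - i)) v = (q - k) v" for v
      using le_funD[OF x(2), of v] le_funD[OF x(3), of v] by auto
    hence "i + (k - i) = k" "i \<le> q" "k - i \<le> q - i" "q - i - (k - i) = q - k"
      by (simp_all add: le_fun_def fun_eq_iff)
    thus "(case (case x of (k, i) \<Rightarrow> (i, k - i)) of (i, l) \<Rightarrow> (i + l, i)) = x"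
      "(case x of (k, i) \<Rightarrow> (i, k - i)) \<in> ?J"
      "(case (case x of (k, i) \<Rightarrow> (i, k - i)) of (i, l) \<Rightarrow> u i * (f l * g (q - i - l)))
        = (case x of (k, i) \<Rightarrow> u i * f (k - i) * g (q - k))"
      using x by simp_all
  next
    fix y assume "y \<in> ?J"
    then obtain i l where y: "y = (i, l)" "i \<le> q" "l \<le> q - i" by auto
    have "(i + l) v \<le> q v" for v using le_funD[OF y(2), of v] le_funD[OF y(3), of v] by auto
    hence "i + l \<le> q" by (simp add: le_fun_def)
    thus "(case (case y of (i, l) \<Rightarrow> (i + l, i)) of (k, i) \<Rightarrow> (i, k - i)) = y"
      "(case y of (i, l) \<Rightarrow> (i + l, i)) \<in> ?I"
      using y by (auto simp: fun_eq_iff le_fun_def)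
  qed
  also have "\<dots> = pmul u (pmul f g) q"
    unfolding pmul_def sum_distrib_left by (rule sum.Sigma[symmetric]) (auto simp: finite_mi_le)
  finally show "pmul (pmul u f) g q = pmul u (pmul f g) q" .
qed

lemma deg_le_pmul:
  assumes "deg_le u N1" "deg_le f N2"
  shows "deg_le (pmul u f) (N1 + N2)"
  unfolding deg_le_def
proof (intro allI impI)
  fix q assume "pmul u f q \<noteq> 0"
  then obtain k where k: "k \<le> q" "u k \<noteq> 0" "f (q - k) \<noteq> 0"
    unfolding pmul_def by (rule sum.not_neutral_contains_not_neutral) auto
  have "msize q = msize k + msize (q - k)" using k by (simp add: msize_diff msize_mono)
  thus "msize q \<le> N1 + N2" using k assms by (auto simp: deg_le_def intro: add_mono)
qed

lemma ord_le_add: "ord_le P d1 \<Longrightarrow> ord_le Q d2 \<Longrightarrow> ord_le (P + Q) (d1 + d2)"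
  unfolding ord_le_def by (metis add_le_mono le_add1 le_add2 le_trans add.assoc add_0 plus_fun_apply)

lemma ord_le_dmul:
  assumes P: "ord_le P d1" and Q: "ord_le Q d2"
  shows "ord_le (dmul P Q) (d1 + d2)"
  unfolding ord_le_def
proof (intro allI impI)
  fix q p assume "dmul P Q q p \<noteq> 0"
  then obtain k i m where h: "i \<le> p" "m \<le> k" "k \<le> q + m" "P k i \<noteq> 0" "Q (q + m - k) (p - i + m) \<noteq> 0"
    unfolding dmul_def by (rule sum.not_neutral_contains_not_neutral) auto
  have "msize k \<le> msize i + d1" using P h by (auto simp: ord_le_def)
  moreover have "msize (q + m - k) \<le> msize (p - i + m) + d2" using Q h unfolding ord_le_def by blast
  moreover have "msize (q + m - k) = msize q + msize m - msize k"
    and "msize (p - i + m) = msize p - msize i + msize m" using h by (simp_all add: msize_diff)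
  moreover have "msize i \<le> msize p" "msize m \<le> msize k" "msize k \<le> msize q + msize m"
    using h by (auto dest: msize_mono)
  ultimately show "msize q \<le> msize p + (d1 + d2)" by linarith
qed

lemma dmul_zero_left [simp]: "dmul 0 Q = 0"
  by (simp add: dmul_def fun_eq_iff)

lemma dmul_zero_right [simp]: "dmul P 0 = 0"
  by (simp add: dmul_def fun_eq_iff)

lemma iotaF_zero [simp]: "iotaF 0 = 0"
  by (simp add: iotaF_def fun_eq_iff)

lemma Fset_add: "u \<in> Fset \<Longrightarrow> v \<in> Fset \<Longrightarrow> u + v \<in> Fset"
  unfolding Fset_def mem_Collect_eq by (rule finite_subset[of _ "{k. u k \<noteq> 0} \<union> {k. v k \<noteq> 0}"]) auto

lemma Fset_Fscale: "u \<in> Fset \<Longrightarrow> Fscale c u \<in> Fset"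
  unfolding Fset_def Fscale_def mem_Collect_eq by (rule finite_subset[of _ "{k. u k \<noteq> 0}"]) auto

lemma Fset_diff: "u \<in> Fset \<Longrightarrow> v \<in> Fset \<Longrightarrow> u - v \<in> Fset"
  unfolding Fset_def mem_Collect_eq by (rule finite_subset[of _ "{k. u k \<noteq> 0} \<union> {k. v k \<noteq> 0}"]) auto

fun lex_less :: "'n list \<Rightarrow> ('n \<Rightarrow> nat) \<Rightarrow> ('n \<Rightarrow> nat) \<Rightarrow> bool" where
  "lex_less [] k k' = False"
| "lex_less (v # vs) k k' = (k v < k' v \<or> (k v = k' v \<and> lex_less vs k k'))"

lemma lex_less_irrefl: "\<not> lex_less vs k k"
  by (induction vs) auto

lemma lex_less_trans: "lex_less vs a b \<Longrightarrow> lex_less vs b c \<Longrightarrow> lex_less vs a c"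
  by (induction vs) auto

lemma lex_less_add_right: "lex_less vs k k' \<Longrightarrow> lex_less vs (k + j) (k' + j)"
  by (induction vs) auto

lemma lex_less_total: "\<exists>v\<in>set vs. k v \<noteq> k' v \<Longrightarrow> lex_less vs k k' \<or> lex_less vs k' k"
  by (induction vs) auto

lemma exists_lex_maximal:
  assumes "finite K" "K \<noteq> {}"
  shows "\<exists>k0\<in>K. \<forall>k\<in>K. \<not> lex_less vs k0 k"
  using assms
proof (induction K rule: finite_ne_induct)
  case (singleton x) thus ?case by (auto simp: lex_less_irrefl)
next
  case (insert x K)
  then obtain k0 where k0: "k0 \<in> K" "\<forall>k\<in>K. \<not> lex_less vs k0 k" by blast
  show ?case
  proof (cases "lex_less vs k0 x")
    case True
    hence "\<forall>k\<in>insert x K. \<not> lex_less vs x k"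
      using k0 lex_less_trans lex_less_irrefl by blast
    thus ?thesis by blast
  qed (use k0 in blast)
qed

text \<open>In a product, the lexicographically largest top-degree monomials of the factors multiply
  to a monomial that no other pair of monomials reaches.\<close>
lemma pmul_nonzero_top_degree:
  fixes u f :: "('n::finite) Fel"
  assumes u: "deg_le u N1" "u k1 \<noteq> 0" "msize k1 = N1"
    and f: "deg_le f N2" "f k2 \<noteq> 0" "msize k2 = N2"
  shows "\<exists>q. msize q = N1 + N2 \<and> pmul u f q \<noteq> 0"
proof -
  obtain vs :: "'n list" where vs: "set vs = UNIV" using finite_list[OF finite_UNIV] by blast
  have total: "k \<noteq> k' \<Longrightarrow> lex_less vs k k' \<or> lex_less vs k' k" for k k' :: "'n mi"
    by (rule lex_less_total) (use vs in \<open>auto simp: fun_eq_iff\<close>)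
  define K1 where "K1 = {k. u k \<noteq> 0 \<and> msize k = N1}"
  define K2 where "K2 = {k. f k \<noteq> 0 \<and> msize k = N2}"
  have "finite K1" unfolding K1_def by (rule finite_subset[OF _ finite_msize_le[of N1]]) auto
  moreover have "finite K2" unfolding K2_def by (rule finite_subset[OF _ finite_msize_le[of N2]]) auto
  moreover have "K1 \<noteq> {}" "K2 \<noteq> {}" using u f by (auto simp: K1_def K2_def)
  ultimately obtain k0 j0 where k0: "k0 \<in> K1" "\<forall>k\<in>K1. \<not> lex_less vs k0 k"
    and j0: "j0 \<in> K2" "\<forall>k\<in>K2. \<not> lex_less vs j0 k"
    using exists_lex_maximal by metis
  define q where "q = k0 + j0"
  have q: "msize q = N1 + N2" using k0 j0 by (simp add: q_def K1_def K2_def)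
  have others: "u k * f (q - k) = 0" if k: "k \<le> q" "k \<noteq> k0" for k
  proof (rule ccontr)
    assume "u k * f (q - k) \<noteq> 0"
    hence nz: "u k \<noteq> 0" "f (q - k) \<noteq> 0" by auto
    have "msize q = msize k + msize (q - k)" using k by (simp add: msize_diff msize_mono)
    moreover have "msize k \<le> N1" "msize (q - k) \<le> N2" using nz u f by (auto simp: deg_le_def)
    ultimately have "k \<in> K1" "q - k \<in> K2" using nz q by (auto simp: K1_def K2_def)
    hence "lex_less vs k k0" using total[OF k(2)] k0(2) by blast
    moreover have "k + (q - k) = q" using k(1) by (simp add: le_fun_def fun_eq_iff)
    ultimately have less: "lex_less vs q (k0 + (q - k))"
      using lex_less_add_right[of vs k k0 "q - k"] by simp
    show False
    proof (cases "q - k = j0")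
      case True
      thus False using less by (simp add: q_def lex_less_irrefl)
    next
      case False
      hence "lex_less vs (q - k) j0" using total j0 \<open>q - k \<in> K2\<close> by blast
      hence "lex_less vs (k0 + (q - k)) q"
        using lex_less_add_right[of vs "q - k" j0 k0] by (simp add: q_def add.commute)
      thus False using less lex_less_trans lex_less_irrefl by blast
    qed
  qed
  have "pmul u f q = (\<Sum>k\<in>{k. k \<le> q}. if k = k0 then u k * f (q - k) else 0)"
    unfolding pmul_def using others by (intro sum.cong) auto
  also have "\<dots> = u k0 * f (q - k0)"
    by (subst sum.delta[OF finite_mi_le]) (simp add: q_def le_fun_def)
  also have "\<dots> = u k0 * f j0" by (simp add: q_def fun_eq_iff)
  finally show ?thesis using q k0 j0 by (auto simp: K1_def K2_def)
qed

lemma exists_top_degree: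
  assumes "w \<in> Fset" "w q0 \<noteq> 0"
  shows "\<exists>k0. w k0 \<noteq> 0 \<and> deg_le w (msize k0) \<and> msize q0 \<le> msize k0"
proof -
  have fin: "finite (msize ` Fsupp w)" using assms by (simp add: Fset_iff_finite_Fsupp)
  obtain k0 where k0: "k0 \<in> Fsupp w" "msize k0 = Max (msize ` Fsupp w)"
    using Max_in[OF fin] assms(2) by (force simp: Fsupp_def)
  have "\<forall>q. w q \<noteq> 0 \<longrightarrow> msize q \<le> msize k0" unfolding k0(2)
    using fin by (auto simp: Fsupp_def intro: Max_ge)
  thus ?thesis using k0(1) assms(2) by (auto simp: deg_le_def Fsupp_def)
qed

lemma pmul_nonzero:
  assumes "u \<in> Fset" "u \<noteq> 0" "f \<in> Fset" "f \<noteq> 0"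
  shows "pmul u f \<noteq> 0"
proof -
  obtain q1 q2 where "u q1 \<noteq> 0" "f q2 \<noteq> 0" using assms by (auto simp: fun_eq_iff)
  then obtain k1 k2 where "u k1 \<noteq> 0" "deg_le u (msize k1)" "f k2 \<noteq> 0" "deg_le f (msize k2)"
    using exists_top_degree assms by metis
  thus ?thesis using pmul_nonzero_top_degree by fastforce
qed

section \<open>Regular operators\<close>

lemma symb_eq:
  assumes "ord S = ereal (real \<mu>)"
  shows "symb S k i = (if msize k = msize i + \<mu> then S k i else 0)"
proof -
  have "ereal (real (msize i) - real (msize k)) = - ord S \<longleftrightarrow> msize k = msize i + \<mu>"
    using assms by auto
  thus ?thesis by (simp add: symb_def)
qed

lemma ract_symb_homogeneous:
  assumes S: "ord S = ereal (real \<mu>)" and w: "w \<in> Fset" "\<And>k. w k \<noteq> 0 \<Longrightarrow> msize k = d"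
    and q: "(w \<circ>\<^sub>F symb S) q \<noteq> 0"
  shows "msize q = d + \<mu>"
proof -
  obtain k where k: "w k \<noteq> 0" "mono_ract k (symb S) q \<noteq> 0"
    using q unfolding ract_eq_sum_Fsupp[OF w(1)]
    by (rule sum.not_neutral_contains_not_neutral) (auto simp: Fsupp_def)
  obtain m where m: "m \<le> k" "k \<le> q + m" "symb S (q + m - k) m \<noteq> 0"
    using k(2) unfolding mono_ract_def by (rule sum.not_neutral_contains_not_neutral) auto
  have "msize (q + m - k) = msize m + \<mu>" using m(3) by (simp add: symb_eq[OF S] split: if_splits)
  moreover have "msize (q + m - k) = msize q + msize m - msize k" using m by (simp add: msize_diff)
  moreover have "msize k \<le> msize q + msize m" using m(2) msize_mono by fastforce
  ultimately show ?thesis using w(2)[OF k(1)] by linarith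
qed

definition top_part :: "nat \<Rightarrow> ('n::finite) Fel \<Rightarrow> 'n Fel" where
  "top_part d w = (\<lambda>k. if msize k = d then w k else 0)"

text \<open>In degree \<open>d + o(S)\<close>, the product \<open>w \<circ> S\<close> only sees the top part of \<open>w\<close> and the symbol of \<open>S\<close>.\<close>
lemma ract_eq_ract_symb_top_part:
  assumes S: "ord S = ereal (real \<mu>)" and w: "w \<in> Fset" "deg_le w d" and q: "msize q = d + \<mu>"
  shows "(w \<circ>\<^sub>F S) q = (top_part d w \<circ>\<^sub>F symb S) q"
proof -
  have dS: "ord_le S \<mu>" using S by (simp add: ord_le_iff)
  have Ksupp: "Fsupp (top_part d w) \<subseteq> Fsupp w" by (auto simp: Fsupp_def top_part_def)
  have K: "finite (Fsupp w)" using w(1) by (simp add: Fset_iff_finite_Fsupp)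
  have "w k * mono_ract k S q = top_part d w k * mono_ract k (symb S) q" if "k \<in> Fsupp w" for k
  proof -
    have kd: "msize k \<le> d" using that w(2) by (auto simp: deg_le_def Fsupp_def)
    have top: "msize k = d \<and> msize (q + m - k) = msize m + \<mu>"
      if "S (q + m - k) m \<noteq> 0" "m \<le> k" "k \<le> q + m" for m
    proof -
      have "msize (q + m - k) \<le> msize m + \<mu>" using dS that by (auto simp: ord_le_def)
      moreover have "msize (q + m - k) = msize q + msize m - msize k" using that by (simp add: msize_diff)
      moreover have "msize k \<le> msize q + msize m" using that(3) msize_mono by fastforce
      ultimately show ?thesis using q kd by linarith
    qed
    show ?thesis
    proof (cases "msize k = d")
      case True
      have "mono_ract k S q = mono_ract k (symb S) q"
        unfolding mono_ract_def by (rule sum.cong) (auto simp: symb_eq[OF S] dest: top)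
      thus ?thesis using True by (simp add: top_part_def)
    next
      case False
      have "mono_ract k S q = 0" unfolding mono_ract_def
        by (rule sum.neutral) (use False top in auto)
      thus ?thesis using False by (simp add: top_part_def)
    qed
  qed
  hence "(\<Sum>k\<in>Fsupp w. w k * mono_ract k S q) = (\<Sum>k\<in>Fsupp w. top_part d w k * mono_ract k (symb S) q)"
    by (rule sum.cong[OF refl])
  thus ?thesis using ract_eq_sum[OF K Ksupp] ract_eq_sum_Fsupp[OF w(1)] by simp
qed

lemma ract_regular_top_degree:
  assumes reg: "regular S" and S: "ord S = ereal (real \<mu>)"
    and w: "w \<in> Fset" "w k0 \<noteq> 0" "deg_le w (msize k0)"
  shows "\<exists>q. msize q = msize k0 + \<mu> \<and> (w \<circ>\<^sub>F S) q \<noteq> 0"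
proof -
  let ?t = "top_part (msize k0) w"
  have tF: "?t \<in> Fset" using w(1) by (auto simp: Fset_iff_finite_Fsupp Fsupp_def top_part_def
        elim: finite_subset[rotated])
  have "?t \<noteq> 0" using w(2) by (auto simp: top_part_def fun_eq_iff)
  hence "?t \<circ>\<^sub>F symb S \<noteq> 0 \<circ>\<^sub>F symb S"
    using reg tF by (auto simp: regular_def Fset_def dest: inj_onD)
  then obtain q where q: "(?t \<circ>\<^sub>F symb S) q \<noteq> 0" by (auto simp: ract_zero fun_eq_iff)
  have "msize q = msize k0 + \<mu>"
    by (rule ract_symb_homogeneous[OF S tF _ q]) (simp add: top_part_def split: if_splits)
  thus ?thesis using q ract_eq_ract_symb_top_part[OF S w(1,3)] by auto
qed

lemma ract_regular_nonzero:
  assumes "regular S" "ord S = ereal (real \<mu>)" "w \<in> Fset" "w \<noteq> 0"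
  shows "w \<circ>\<^sub>F S \<noteq> 0"
proof -
  obtain q0 where "w q0 \<noteq> 0" using assms by (auto simp: fun_eq_iff)
  then obtain k0 where "w k0 \<noteq> 0" "deg_le w (msize k0)" using exists_top_degree assms by blast
  thus ?thesis using ract_regular_top_degree[OF assms(1-3)] by (auto simp: fun_eq_iff)
qed

lemma deg_le_of_ract_regular:
  assumes "regular S" "ord S = ereal (real \<mu>)" "w \<in> Fset" "deg_le (w \<circ>\<^sub>F S) (N + \<mu>)"
  shows "deg_le w N"
  unfolding deg_le_def
proof (intro allI impI, rule ccontr)
  fix q0 assume q0: "w q0 \<noteq> 0" "\<not> msize q0 \<le> N"
  obtain k0 where k0: "w k0 \<noteq> 0" "deg_le w (msize k0)" "msize q0 \<le> msize k0"
    using exists_top_degree[OF assms(3) q0(1)] by blast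
  obtain q where "msize q = msize k0 + \<mu>" "(w \<circ>\<^sub>F S) q \<noteq> 0"
    using ract_regular_top_degree[OF assms(1-3) k0(1,2)] by blast
  thus False using assms(4) q0(2) k0(3) by (auto simp: deg_le_def)
qed

lemma inj_on_ract_regular:
  assumes "regular S" "ord S = ereal (real \<mu>)"
  shows "inj_on (\<lambda>w. w \<circ>\<^sub>F S) Fset"
proof (rule inj_onI, rule ccontr)
  fix u v assume uv: "u \<in> Fset" "v \<in> Fset" "u \<circ>\<^sub>F S = v \<circ>\<^sub>F S" "u \<noteq> v"
  have vF: "Fscale (-1) v \<in> Fset" using uv(2) by (rule Fset_Fscale)
  have "u + Fscale (-1) v \<noteq> 0" using uv(4) by (auto simp: Fscale_def fun_eq_iff)
  hence "(u + Fscale (-1) v) \<circ>\<^sub>F S \<noteq> 0"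
    using ract_regular_nonzero[OF assms Fset_add[OF uv(1) vF]] by blast
  moreover have "(u + Fscale (-1) v) \<circ>\<^sub>F S = u \<circ>\<^sub>F S + Fscale (-1) (v \<circ>\<^sub>F S)"
    by (simp add: ract_add[OF uv(1) vF] ract_Fscale[OF uv(2)])
  ultimately show False
    using uv by (simp add: ract_add ract_Fscale fun_eq_iff Fscale_def)
qed

section \<open>Operators with prescribed monomial actions\<close>

text \<open>Inverts the triangular system of \<open>mono_ract_split\<close>.\<close>
function op_of_mono_racts :: "(('n::finite) mi \<Rightarrow> 'n Fel) \<Rightarrow> 'n dop" where
  "op_of_mono_racts T q j = (T j q
     - (\<Sum>m\<in>{m. m \<le> j \<and> m \<noteq> j \<and> j \<le> q + m}. op_of_mono_racts T (q + m - j) m * mi_ffact j m))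
     / mi_ffact j j"
  by auto
termination by (relation "measure (\<lambda>(T, q, j). msize j)") (auto intro: msize_strict_mono)

declare op_of_mono_racts.simps [simp del]

lemma mono_ract_op_of_mono_racts: "mono_ract j (op_of_mono_racts T) = T j"
proof
  fix q
  show "mono_ract j (op_of_mono_racts T) q = T j q"
    unfolding mono_ract_split[of j _ q] op_of_mono_racts.simps[of T q j]
    using mi_ffact_self_nonzero[of j] by simp
qed

lemma ord_le_op_of_mono_racts:
  assumes "\<And>j. deg_le (T j) (msize j + d)"
  shows "ord_le (op_of_mono_racts T) d"
proof -
  have "\<forall>q. op_of_mono_racts T q j \<noteq> 0 \<longrightarrow> msize q \<le> msize j + d" for j
  proof (induction j rule: measure_induct_rule[of msize])
    case (less j)
    show ?case
    proof (intro allI impI, rule ccontr)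
      fix q assume nz: "op_of_mono_racts T q j \<noteq> 0" and big: "\<not> msize q \<le> msize j + d"
      have "T j q = 0" using assms[of j] big by (auto simp: deg_le_def)
      moreover have "op_of_mono_racts T (q + m - j) m = 0"
        if m: "m \<le> j" "m \<noteq> j" "j \<le> q + m" for m
      proof -
        have "msize (q + m - j) = msize q + msize m - msize j" using m by (simp add: msize_diff)
        moreover have "msize j \<le> msize q + msize m" using m msize_mono by fastforce
        ultimately have "\<not> msize (q + m - j) \<le> msize m + d" using big by linarith
        thus ?thesis using less m msize_strict_mono by blast
      qed
      ultimately have "op_of_mono_racts T q j = 0" by (subst op_of_mono_racts.simps) simp
      thus False using nz by simp
    qed
  qed
  thus ?thesis by (auto simp: ord_le_def)
qed

lemma dmul_iotaF_eq_iff_mono_ract: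
  fixes S L :: "('n::finite) dop"
  assumes S: "ord_le S dS" and L: "ord_le L dL" and f: "f \<in> Fset"
  shows "dmul S (iotaF f) = dmul L S \<longleftrightarrow> (\<forall>j. mono_ract j L \<circ>\<^sub>F S = pmul (mono_ract j S) f)"
proof -
  obtain N where "deg_le f N" using Fset_imp_deg_le[OF f] by blast
  hence I: "ord_le (iotaF f) N" by (rule ord_le_iotaF)
  have "mono_ract j L \<circ>\<^sub>F S = mono_ract j (dmul L S)"
    and "pmul (mono_ract j S) f = mono_ract j (dmul S (iotaF f))" for j
    using ract_dmul[OF Fmono_in_Fset L S] ract_dmul[OF Fmono_in_Fset S I]
      ract_iotaF[OF mono_ract_in_Fset[OF S]] by (simp_all add: ract_Fmono)
  thus ?thesis using dop_eqI_mono_ract by metis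
qed

lemma ract_intertwiner:
  fixes S L :: "('n::finite) dop"
  assumes S: "ord_le S dS" and L: "ord_le L dL" and f: "f \<in> Fset" and w: "w \<in> Fset"
    and SL: "dmul S (iotaF f) = dmul L S"
  shows "(w \<circ>\<^sub>F L) \<circ>\<^sub>F S = pmul (w \<circ>\<^sub>F S) f"
proof -
  obtain N where "deg_le f N" using Fset_imp_deg_le[OF f] by blast
  hence I: "ord_le (iotaF f) N" by (rule ord_le_iotaF)
  have "(w \<circ>\<^sub>F L) \<circ>\<^sub>F S = w \<circ>\<^sub>F dmul L S" by (rule ract_dmul[OF w L S])
  also have "\<dots> = (w \<circ>\<^sub>F S) \<circ>\<^sub>F iotaF f" by (simp add: SL ract_dmul[OF w S I])
  also have "\<dots> = pmul (w \<circ>\<^sub>F S) f" by (rule ract_iotaF[OF ract_in_Fset[OF w ord_le_imp_Salg[OF S]]])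
  finally show ?thesis .
qed

lemma intertwiner_unique:
  fixes S L L' :: "('n::finite) dop"
  assumes reg: "regular S" and S: "ord S = ereal (real \<mu>)" and f: "f \<in> Fset"
    and L: "L \<in> Salg" "dmul S (iotaF f) = dmul L S"
    and L': "L' \<in> Salg" "dmul S (iotaF f) = dmul L' S"
  shows "L = L'"
proof (rule dop_eqI_mono_ract)
  fix j
  have dS: "ord_le S \<mu>" using S by (simp add: ord_le_iff)
  obtain d d' where d: "ord_le L d" and d': "ord_le L' d'" using Salg_imp_ord_le L(1) L'(1) by metis
  have "mono_ract j L \<circ>\<^sub>F S = mono_ract j L' \<circ>\<^sub>F S"
    using dmul_iotaF_eq_iff_mono_ract[OF dS d f] dmul_iotaF_eq_iff_mono_ract[OF dS d' f] L(2) L'(2)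
    by simp
  thus "mono_ract j L = mono_ract j L'"
    using inj_on_ract_regular[OF reg S] mono_ract_in_Fset[OF d] mono_ract_in_Fset[OF d']
    by (auto dest: inj_onD)
qed

lemma intertwiner_exists:
  fixes S :: "('n::finite) dop"
  assumes reg: "regular S" and S: "ord S = ereal (real \<mu>)" and f: "deg_le f d"
    and stable: "\<And>j. \<exists>u\<in>Fset. u \<circ>\<^sub>F S = pmul (mono_ract j S) f"
  shows "\<exists>L. ord_le L d \<and> dmul S (iotaF f) = dmul L S"
proof -
  have dS: "ord_le S \<mu>" using S by (simp add: ord_le_iff)
  obtain T where T: "\<And>j. T j \<in> Fset \<and> T j \<circ>\<^sub>F S = pmul (mono_ract j S) f"
    using stable by metis
  have "deg_le (T j) (msize j + d)" for j
  proof (rule deg_le_of_ract_regular[OF reg S])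
    show "T j \<in> Fset" using T by blast
    have "deg_le (pmul (mono_ract j S) f) (msize j + \<mu> + d)"
      by (rule deg_le_pmul[OF deg_le_mono_ract[OF dS] f])
    thus "deg_le (T j \<circ>\<^sub>F S) (msize j + d + \<mu>)" using T[of j] by (simp add: ac_simps)
  qed
  hence L: "ord_le (op_of_mono_racts T) d" by (rule ord_le_op_of_mono_racts)
  have "dmul S (iotaF f) = dmul (op_of_mono_racts T) S"
    using dmul_iotaF_eq_iff_mono_ract[OF dS L deg_le_imp_Fset[OF f]] T
    by (simp add: mono_ract_op_of_mono_racts)
  thus ?thesis using L by blast
qed

section \<open>The homomorphism \<open>L\<^sub>S\<close>\<close>

lemma ord_ge_of_ract_mono_ract_zero:
  fixes S L :: "('n::finite) dop"
  assumes S: "ord_le S \<mu>" and L: "ord_le L d" and q: "(mono_ract 0 L \<circ>\<^sub>F S) q \<noteq> 0"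
  shows "ereal (real (msize q) - real \<mu>) \<le> ord L"
proof -
  obtain k where k: "k \<in> Fsupp (mono_ract 0 L)" "mono_ract k S q \<noteq> 0"
    using q unfolding ract_eq_sum_Fsupp[OF mono_ract_in_Fset[OF L]]
    by (rule sum.not_neutral_contains_not_neutral) auto
  have "msize q \<le> msize k + \<mu>" using deg_le_mono_ract[OF S, of k] k(2) by (auto simp: deg_le_def)
  hence "ereal (real (msize q) - real \<mu>) \<le> ereal (real (msize k) - real (msize (0::'n mi)))" by simp
  also have "\<dots> \<le> ord L" using k(1) by (intro ord_ge_coeff) (simp add: Fsupp_def mono_ract_zero)
  finally show ?thesis .
qed

locale sato_stable_algebra =
  fixes \<mu> :: nat and S :: "('n::finite) dop" and A :: "'n Fel set"
  assumes regular: "regular S" and ord_S: "ord S = ereal (real \<mu>)"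
    and subalgebra: "Fsubalgebra A"
    and stable: "\<And>w f. w \<in> Fset \<Longrightarrow> f \<in> A \<Longrightarrow> pmul (w \<circ>\<^sub>F S) f \<in> (\<lambda>u. u \<circ>\<^sub>F S) ` Fset"
begin

lemma ord_le_S: "ord_le S \<mu>"
  using ord_S by (simp add: ord_le_iff)

lemma subalgebra_elem_in_Fset: "f \<in> A \<Longrightarrow> f \<in> Fset"
  using subalgebra by (auto simp: Fsubalgebra_def)

lemma exists_intertwiner:
  assumes "f \<in> A" "deg_le f d"
  shows "\<exists>L. ord_le L d \<and> dmul S (iotaF f) = dmul L S"
proof (rule intertwiner_exists[OF regular ord_S assms(2)])
  fix j show "\<exists>u\<in>Fset. u \<circ>\<^sub>F S = pmul (mono_ract j S) f"
    using stable[OF Fmono_in_Fset assms(1), of j] by (auto simp: ract_Fmono)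
qed

lemma LS_ex1: "f \<in> A \<Longrightarrow> \<exists>!L. L \<in> Salg \<and> dmul S (iotaF f) = dmul L S"
  using exists_intertwiner Fset_imp_deg_le subalgebra_elem_in_Fset ord_le_imp_Salg
    intertwiner_unique[OF regular ord_S]
  by metis

lemma LS_intertwines: "f \<in> A \<Longrightarrow> LS S f \<in> Salg \<and> dmul S (iotaF f) = dmul (LS S f) S"
  unfolding LS_def by (rule theI'[OF LS_ex1])

lemma LS_eqI: "f \<in> A \<Longrightarrow> L \<in> Salg \<Longrightarrow> dmul S (iotaF f) = dmul L S \<Longrightarrow> LS S f = L"
  using LS_ex1 LS_intertwines by blast

lemma ord_le_LS: "f \<in> A \<Longrightarrow> \<exists>d. ord_le (LS S f) d"
  using LS_intertwines Salg_imp_ord_le by blast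

lemma mono_ract_LS: "f \<in> A \<Longrightarrow> mono_ract j (LS S f) \<circ>\<^sub>F S = pmul (mono_ract j S) f"
  using ord_le_LS LS_intertwines dmul_iotaF_eq_iff_mono_ract[OF ord_le_S] subalgebra_elem_in_Fset
  by metis

lemma LS_eqI_mono_ract:
  assumes "f \<in> A" "ord_le L d" "\<And>j. mono_ract j L \<circ>\<^sub>F S = pmul (mono_ract j S) f"
  shows "LS S f = L"
  using assms LS_eqI ord_le_imp_Salg dmul_iotaF_eq_iff_mono_ract[OF ord_le_S] subalgebra_elem_in_Fset
  by metis

lemma ract_LS: "f \<in> A \<Longrightarrow> w \<in> Fset \<Longrightarrow> (w \<circ>\<^sub>F LS S f) \<circ>\<^sub>F S = pmul (w \<circ>\<^sub>F S) f"
  using ord_le_LS LS_intertwines ract_intertwiner[OF ord_le_S] subalgebra_elem_in_Fset by metis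

lemma mono_ract_zero_S_top_degree: "\<exists>q. msize q = \<mu> \<and> mono_ract 0 S q \<noteq> 0"
proof -
  have "Fmono 0 (0::'n mi) \<noteq> 0" "deg_le (Fmono (0::'n mi)) (msize (0::'n mi))"
    by (simp_all add: Fmono_def deg_le_def)
  from ract_regular_top_degree[OF regular ord_S Fmono_in_Fset this] show ?thesis
    by (simp add: ract_Fmono)
qed

lemma mono_ract_zero_S_nonzero: "mono_ract 0 S \<noteq> 0"
  using mono_ract_zero_S_top_degree by auto

lemma ord_LS: "f \<in> A \<Longrightarrow> ord (LS S f) = degF f"
proof (cases "f = 0")
  case True
  assume "f \<in> A"
  hence "LS S f = 0"
    using LS_eqI[of 0 0] ord_le_imp_Salg[of 0 0] True by (simp add: ord_le_def)
  thus ?thesis using True by (simp add: degF_def)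
next
  case False
  assume f: "f \<in> A"
  obtain k where k: "f k \<noteq> 0" "deg_le f (msize k)"
    using False exists_top_degree subalgebra_elem_in_Fset[OF f] by (metis fun_eq_iff zero_fun_def)
  then obtain L where L: "ord_le L (msize k)" "dmul S (iotaF f) = dmul L S"
    using exists_intertwiner[OF f] by blast
  have LS: "LS S f = L" using LS_eqI[OF f ord_le_imp_Salg[OF L(1)] L(2)] .
  obtain q0 where q0: "msize q0 = \<mu>" "mono_ract 0 S q0 \<noteq> 0"
    using mono_ract_zero_S_top_degree by blast
  have u0: "deg_le (mono_ract 0 S) \<mu>" using deg_le_mono_ract[OF ord_le_S, of "0::'n mi"] by simp
  obtain q where q: "msize q = \<mu> + msize k" "pmul (mono_ract 0 S) f q \<noteq> 0"
    using pmul_nonzero_top_degree[OF u0 q0(2) q0(1) k(2) k(1) refl] by blast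
  have "ereal (real (msize k)) \<le> ord L"
    using ord_ge_of_ract_mono_ract_zero[OF ord_le_S L(1), of q] q mono_ract_LS[OF f, of 0] LS
    by simp
  moreover have "ord L \<le> ereal (real (msize k))" using L(1) by (simp add: ord_le_iff)
  ultimately show ?thesis using LS degF_eq_top_degree[OF k] by simp
qed

lemma inj_on_LS: "inj_on (LS S) A"
proof (rule inj_onI)
  fix f g assume f: "f \<in> A" and g: "g \<in> A" and fg: "LS S f = LS S g"
  have "pmul (mono_ract 0 S) (f - g) = 0"
    using mono_ract_LS[OF f, of 0] mono_ract_LS[OF g, of 0] fg by (simp add: pmul_diff)
  thus "f = g"
    using pmul_nonzero[OF mono_ract_in_Fset[OF ord_le_S] mono_ract_zero_S_nonzero]
      Fset_diff[OF subalgebra_elem_in_Fset[OF f] subalgebra_elem_in_Fset[OF g]]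
    by (metis right_minus_eq)
qed

lemma LS_Fone: "LS S Fone = Sone"
  using subalgebra
  by (intro LS_eqI_mono_ract[OF _ ord_le_Sone])
    (auto simp: Fsubalgebra_def mono_ract_Sone ract_Fmono pmul_Fone)

lemma LS_add: "f \<in> A \<Longrightarrow> g \<in> A \<Longrightarrow> LS S (f + g) = LS S f + LS S g"
proof -
  assume f: "f \<in> A" and g: "g \<in> A"
  obtain d1 d2 where d: "ord_le (LS S f) d1" "ord_le (LS S g) d2" using ord_le_LS f g by metis
  have "f + g \<in> A" using subalgebra f g by (simp add: Fsubalgebra_def)
  moreover have "ord_le (LS S f + LS S g) (d1 + d2)" using ord_le_add[OF d] .
  ultimately show ?thesis
    by (rule LS_eqI_mono_ract)
      (simp add: mono_ract_add ract_add[OF mono_ract_in_Fset[OF d(1)] mono_ract_in_Fset[OF d(2)]]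
        mono_ract_LS[OF f] mono_ract_LS[OF g] pmul_add)
qed

lemma LS_Fscale: "f \<in> A \<Longrightarrow> LS S (Fscale c f) = dscale c (LS S f)"
proof -
  assume f: "f \<in> A"
  obtain d where d: "ord_le (LS S f) d" using ord_le_LS f by metis
  have "Fscale c f \<in> A" using subalgebra f by (simp add: Fsubalgebra_def)
  moreover have "ord_le (dscale c (LS S f)) d" using d by (simp add: ord_le_def dscale_def)
  ultimately show ?thesis
    by (rule LS_eqI_mono_ract)
      (simp add: mono_ract_dscale ract_Fscale[OF mono_ract_in_Fset[OF d]] mono_ract_LS[OF f] pmul_Fscale)
qed

lemma LS_pmul: "f \<in> A \<Longrightarrow> g \<in> A \<Longrightarrow> LS S (pmul f g) = dmul (LS S f) (LS S g)"
proof -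
  assume f: "f \<in> A" and g: "g \<in> A"
  obtain d1 d2 where d: "ord_le (LS S f) d1" "ord_le (LS S g) d2" using ord_le_LS f g by metis
  have "mono_ract j (dmul (LS S f) (LS S g)) \<circ>\<^sub>F S = pmul (mono_ract j S) (pmul f g)" for j
  proof -
    have "mono_ract j (dmul (LS S f) (LS S g)) \<circ>\<^sub>F S = (mono_ract j (LS S f) \<circ>\<^sub>F LS S g) \<circ>\<^sub>F S"
      using ract_dmul[OF Fmono_in_Fset d] by (simp add: ract_Fmono)
    also have "\<dots> = pmul (pmul (mono_ract j S) f) g"
      using ract_LS[OF g mono_ract_in_Fset[OF d(1)]] mono_ract_LS[OF f] by simp
    finally show ?thesis by (simp add: pmul_assoc)
  qed
  moreover have "pmul f g \<in> A" using subalgebra f g by (simp add: Fsubalgebra_def)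
  ultimately show ?thesis using LS_eqI_mono_ract ord_le_dmul[OF d] by blast
qed

end

theorem theorem5p18:
  fixes \<mu> :: nat and W A :: "('n::finite) Fel set" and S :: "'n dop"
  assumes W: "W \<in> Gr \<mu>"
    and A: "Fsubalgebra A"
    and WA: "{pmul w f | w f. w \<in> W \<and> f \<in> A} = W"
    and S: "sato_op \<mu> W S"
  shows "(\<forall>f\<in>A. (\<exists>!L. L \<in> Salg \<and> dmul S (iotaF f) = dmul L S) \<and> ord (LS S f) = degF f)
    \<and> (inj_on (LS S) A
       \<and> LS S Fone = Sone
       \<and> (\<forall>f\<in>A. \<forall>g\<in>A. LS S (f + g) = LS S f + LS S g)
       \<and> (\<forall>c. \<forall>f\<in>A. LS S (Fscale c f) = dscale c (LS S f))
       \<and> (\<forall>f\<in>A. \<forall>g\<in>A. LS S (pmul f g) = dmul (LS S f) (LS S g)))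
    \<and> (\<forall>f\<in>A. \<forall>w\<in>Fset. (w \<circ>\<^sub>F LS S f) \<circ>\<^sub>F S = pmul (w \<circ>\<^sub>F S) f)"
proof -
  have W_eq: "W = (\<lambda>w. w \<circ>\<^sub>F S) ` Fset" using S by (simp add: sato_op_def)
  interpret sato_stable_algebra \<mu> S A
  proof
    show "regular S" "ord S = ereal (real \<mu>)" using S by (simp_all add: sato_op_def)
    show "pmul (w \<circ>\<^sub>F S) f \<in> (\<lambda>u. u \<circ>\<^sub>F S) ` Fset" if "w \<in> Fset" "f \<in> A" for w f
      using WA that unfolding W_eq by blast
  qed (rule A)
  show ?thesis
    using LS_ex1 ord_LS inj_on_LS LS_Fone LS_add LS_Fscale LS_pmul ract_LS by blast
qed

end
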